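(* Let $k\ge1$ be an integer, let $G=(V,E)$ be an undirected graph with edges partitioned into unsafe edges $\mathscr{U}$ and safe edges $\mathscr{S}$ and with nonnegative costs $\{c_e\}_{e\in E}$, let $r\in V$, and let $F\subseteq E$ be a feasible solution for $k$-FGC. Consider the digraph $D=(V,A)$ where, for each unsafe edge $e=uv\in F\cap\mathscr{U}$, $A$ contains one bidirected pair $\{(u,v),(v,u)\}$ arising from $e$, and for each safe edge $e=uv\in F\cap\mathscr{S}$, $A$ contains $k+1$ (distinct, parallel) bidirected pairs arising from $e$; each arc is given the cost of the edge it arises from. Then $D$ contains an $r$-out $(k+1)$-arborescence of cost at most $(k+1)c(F)$.
   Context: $F\subseteq E$ is feasible for $k$-FGC if for every $X\subseteq F\cap\mathscr{U}$ with $|X|\le k$, the subgraph $(V,F\setminus X)$ is connected; $c(F)=\sum_{e\in F}c_e$. An $r$-out arborescence $(V,T)$ in $D$ is a subgraph such that the undirected version of $T$ is acyclic and for every $v\in V\setminus\{r\}$ there is a directed $r\to v$ path in $(V,T)$. An $r$-out $(k+1)$-arborescence is a subgraph $(V,T)$ of $D$ whose arc set can be partitioned into $k+1$ arc-disjoint $r$-out arborescences; its cost is the sum of the costs of its arcs. *)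

theory Defs
  imports Complex_Main
begin

text \<open>Undirected multigraph: vertex set V, edge set E (abstract edge identifiers of type 'e),
  and an endpoint map ends :: 'e \<Rightarrow> 'v \<times> 'v.\<close>

definition ugraph :: "'v set \<Rightarrow> 'e set \<Rightarrow> ('e \<Rightarrow> 'v \<times> 'v) \<Rightarrow> bool" where
  "ugraph V E ends \<longleftrightarrow> finite V \<and> finite E \<and> (\<forall>e\<in>E. fst (ends e) \<in> V \<and> snd (ends e) \<in> V)"

definition adj :: "('e \<Rightarrow> 'v \<times> 'v) \<Rightarrow> 'e set \<Rightarrow> ('v \<times> 'v) set" where
  "adj ends H = {(x, y). \<exists>e\<in>H. ends e = (x, y) \<or> ends e = (y, x)}"

definition connected_sub :: "'v set \<Rightarrow> ('e \<Rightarrow> 'v \<times> 'v) \<Rightarrow> 'e set \<Rightarrow> bool" where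
  "connected_sub V ends H \<longleftrightarrow> (\<forall>u\<in>V. \<forall>v\<in>V. (u, v) \<in> (adj ends H)\<^sup>*)"

text \<open>Feasibility for k-FGC: U is the set of unsafe edges.\<close>
definition kFGC_feasible :: "nat \<Rightarrow> 'v set \<Rightarrow> 'e set \<Rightarrow> ('e \<Rightarrow> 'v \<times> 'v) \<Rightarrow> 'e set \<Rightarrow> 'e set \<Rightarrow> bool" where
  "kFGC_feasible k V E ends U F \<longleftrightarrow> F \<subseteq> E \<and>
     (\<forall>X. X \<subseteq> F \<inter> U \<longrightarrow> card X \<le> k \<longrightarrow> connected_sub V ends (F - X))"

definition cost :: "('e \<Rightarrow> real) \<Rightarrow> 'e set \<Rightarrow> real" where
  "cost c F = (\<Sum>e\<in>F. c e)"

text \<open>Arcs of the digraph D: an arc is (e, i, b) = the i-th copy of the bidirected pair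
  arising from edge e, oriented along ends e if b, against it otherwise.\<close>
type_synonym 'e arc = "'e \<times> nat \<times> bool"

definition arc_edge :: "'e arc \<Rightarrow> 'e" where
  "arc_edge a = fst a"

definition arc_tail :: "('e \<Rightarrow> 'v \<times> 'v) \<Rightarrow> 'e arc \<Rightarrow> 'v" where
  "arc_tail ends a = (if snd (snd a) then fst (ends (fst a)) else snd (ends (fst a)))"

definition arc_head :: "('e \<Rightarrow> 'v \<times> 'v) \<Rightarrow> 'e arc \<Rightarrow> 'v" where
  "arc_head ends a = (if snd (snd a) then snd (ends (fst a)) else fst (ends (fst a)))"

definition D_arcs :: "nat \<Rightarrow> 'e set \<Rightarrow> 'e set \<Rightarrow> 'e set \<Rightarrow> 'e arc set" where
  "D_arcs k U S F = {(e, i, b). (e \<in> F \<inter> U \<and> i = 0) \<or> (e \<in> F \<inter> S \<and> i \<le> k)}"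

definition arc_cost :: "('e \<Rightarrow> real) \<Rightarrow> 'e arc set \<Rightarrow> real" where
  "arc_cost c T = (\<Sum>a\<in>T. c (arc_edge a))"

definition undirected_cycle :: "('e \<Rightarrow> 'v \<times> 'v) \<Rightarrow> 'e arc set \<Rightarrow> 'e arc list \<Rightarrow> 'v list \<Rightarrow> bool" where
  "undirected_cycle ends T as vs \<longleftrightarrow>
     as \<noteq> [] \<and> set as \<subseteq> T \<and> distinct as \<and> length vs = length as + 1 \<and>
     (\<forall>i<length as. (arc_tail ends (as ! i) = vs ! i \<and> arc_head ends (as ! i) = vs ! Suc i) \<or>
                     (arc_head ends (as ! i) = vs ! i \<and> arc_tail ends (as ! i) = vs ! Suc i)) \<and>
     hd vs = last vs \<and> distinct (tl vs)"

definition undirected_acyclic :: "('e \<Rightarrow> 'v \<times> 'v) \<Rightarrow> 'e arc set \<Rightarrow> bool" where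
  "undirected_acyclic ends T \<longleftrightarrow> (\<nexists>as vs. undirected_cycle ends T as vs)"

definition dir_rel :: "('e \<Rightarrow> 'v \<times> 'v) \<Rightarrow> 'e arc set \<Rightarrow> ('v \<times> 'v) set" where
  "dir_rel ends T = {(arc_tail ends a, arc_head ends a) | a. a \<in> T}"

definition r_out_arborescence :: "'v set \<Rightarrow> ('e \<Rightarrow> 'v \<times> 'v) \<Rightarrow> 'e arc set \<Rightarrow> 'v \<Rightarrow> 'e arc set \<Rightarrow> bool" where
  "r_out_arborescence V ends A r T \<longleftrightarrow>
     T \<subseteq> A \<and> undirected_acyclic ends T \<and>
     (\<forall>v\<in>V - {r}. (r, v) \<in> (dir_rel ends T)\<^sup>*)"

definition r_out_multi_arborescence :: "nat \<Rightarrow> 'v set \<Rightarrow> ('e \<Rightarrow> 'v \<times> 'v) \<Rightarrow> 'e arc set \<Rightarrow> 'v \<Rightarrow> 'e arc set \<Rightarrow> bool" where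
  "r_out_multi_arborescence k V ends A r T \<longleftrightarrow>
     T \<subseteq> A \<and>
     (\<exists>Ts :: nat \<Rightarrow> 'e arc set.
        (\<forall>i\<le>k. r_out_arborescence V ends A r (Ts i)) \<and>
        (\<forall>i\<le>k. \<forall>j\<le>k. i \<noteq> j \<longrightarrow> Ts i \<inter> Ts j = {}) \<and>
        T = (\<Union>i\<le>k. Ts i))"

end

theory Submission
  imports Defs
begin

text \<open>Every nonempty \<open>X \<subseteq> V - {r}\<close> is entered by at least \<open>k + 1\<close> arcs of \<open>D\<close>: either
  a safe edge of \<open>F\<close> crosses \<open>X\<close>, and each of its \<open>k + 1\<close> copies contributes an entering arc,
  or all crossing edges are unsafe, and feasibility forces at least \<open>k + 1\<close> of them.
  By Edmonds' branching theorem \<open>D\<close> therefore contains \<open>k + 1\<close> arc-disjoint spanning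
  \<open>r\<close>-out arborescences. We prove it by Lovasz's argument: grow the arborescences one arc at
  a time, keeping every cut entered by at least as many unused arcs as there are arborescences
  still disjoint from it; uncrossing of tight cuts shows that a suitable arc always exists.
  Finally, the heads of the arcs of an arborescence are distinct, so it never uses two arcs
  arising from the same edge and costs at most \<open>c(F)\<close>.\<close>

definition disjoint_count :: "nat \<Rightarrow> (nat \<Rightarrow> 'v set) \<Rightarrow> 'v set \<Rightarrow> nat" where
  "disjoint_count n R X = (\<Sum>j<n. if X \<inter> R j = {} then 1 else 0)"

lemma disjoint_count_supermodular:
  assumes "i < n"
  shows "disjoint_count n R X + disjoint_count n R Z
           + (if X \<inter> Z \<inter> R i = {} \<and> X \<inter> R i \<noteq> {} \<and> Z \<inter> R i \<noteq> {} then 1 else 0)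
         \<le> disjoint_count n R (X \<union> Z) + disjoint_count n R (X \<inter> Z)"
proof -
  let ?c = "(if X \<inter> Z \<inter> R i = {} \<and> X \<inter> R i \<noteq> {} \<and> Z \<inter> R i \<noteq> {} then 1 else 0) :: nat"
  have "?c = (\<Sum>j<n. if j = i then ?c else 0)" using assms by simp
  then have "disjoint_count n R X + disjoint_count n R Z + ?c =
      (\<Sum>j<n. (if X \<inter> R j = {} then 1 else 0) + (if Z \<inter> R j = {} then 1 else 0)
               + (if j = i then ?c else 0))"
    unfolding disjoint_count_def sum.distrib by simp
  also have "\<dots> \<le> (\<Sum>j<n. (if (X \<union> Z) \<inter> R j = {} then 1 else 0) + (if X \<inter> Z \<inter> R j = {} then 1 else 0))"
    by (rule sum_mono) auto
  also have "\<dots> = disjoint_count n R (X \<union> Z) + disjoint_count n R (X \<inter> Z)"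
    unfolding disjoint_count_def sum.distrib by simp
  finally show ?thesis .
qed

lemma disjoint_count_strict_antimono:
  assumes "i < n" "Y \<subseteq> X" "X \<inter> R i \<noteq> {}" "Y \<inter> R i = {}"
  shows "disjoint_count n R X < disjoint_count n R Y"
  unfolding disjoint_count_def by (rule sum_strict_mono_ex1) (use assms in auto)

lemma disjoint_count_insert:
  assumes "i < n"
  shows "disjoint_count n R X =
           disjoint_count n (R(i := insert v (R i))) X + (if X \<inter> R i = {} \<and> v \<in> X then 1 else 0)"
proof -
  let ?c = "(if X \<inter> R i = {} \<and> v \<in> X then 1 else 0) :: nat"
  have "?c = (\<Sum>j<n. if j = i then ?c else 0)" using assms by simp
  moreover have "disjoint_count n R X =
      (\<Sum>j<n. (if X \<inter> (R(i := insert v (R i))) j = {} then 1 else 0) + (if j = i then ?c else 0))"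
    unfolding disjoint_count_def by (rule sum.cong) auto
  ultimately show ?thesis unfolding sum.distrib disjoint_count_def by simp
qed

context
  fixes tail head :: "'a \<Rightarrow> 'v"
begin

definition in_degree :: "'a set \<Rightarrow> 'v set \<Rightarrow> nat" where
  "in_degree B X = (\<Sum>a\<in>B. if tail a \<notin> X \<and> head a \<in> X then 1 else 0)"

definition arc_rel :: "'a set \<Rightarrow> ('v \<times> 'v) set" where
  "arc_rel T = {(tail a, head a) | a. a \<in> T}"

text \<open>An increasing rank together with distinct heads is what rules out cycles in the
  underlying undirected graph.\<close>
definition ranked_arborescence :: "'v \<Rightarrow> 'v set \<Rightarrow> 'a set \<Rightarrow> ('v \<Rightarrow> nat) \<Rightarrow> bool" where
  "ranked_arborescence r R T rank \<longleftrightarrow> r \<in> R \<and>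
     (\<forall>a\<in>T. tail a \<in> R \<and> head a \<in> R \<and> rank (tail a) < rank (head a)) \<and>
     inj_on head T \<and> (\<forall>v\<in>R. (r, v) \<in> (arc_rel T)\<^sup>*)"

text \<open>Lovasz's invariant: \<open>disjoint_count n R X\<close> is the number of arborescences that still
  have to enter \<open>X\<close>.\<close>
definition cut_condition :: "'v set \<Rightarrow> 'v \<Rightarrow> nat \<Rightarrow> (nat \<Rightarrow> 'v set) \<Rightarrow> 'a set \<Rightarrow> bool" where
  "cut_condition V r n R B \<longleftrightarrow>
     (\<forall>X. X \<subseteq> V - {r} \<longrightarrow> X \<noteq> {} \<longrightarrow> disjoint_count n R X \<le> in_degree B X)"

text \<open>Arcs entering a tight cut must not be added to the \<open>i\<close>-th arborescence: that would
  violate the cut condition for the enlarged \<open>R i\<close>.\<close>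
definition tight_cut :: "'v set \<Rightarrow> 'v \<Rightarrow> nat \<Rightarrow> (nat \<Rightarrow> 'v set) \<Rightarrow> 'a set \<Rightarrow> nat \<Rightarrow> 'v set \<Rightarrow> bool"
  where
  "tight_cut V r n R B i X \<longleftrightarrow> X \<subseteq> V - {r} \<and> in_degree B X = disjoint_count n R X \<and>
     X \<inter> R i \<noteq> {} \<and> X - R i \<noteq> {}"

definition partial_packing ::
    "'v set \<Rightarrow> 'a set \<Rightarrow> 'v \<Rightarrow> nat \<Rightarrow> (nat \<Rightarrow> 'v set) \<Rightarrow> (nat \<Rightarrow> 'a set) \<Rightarrow> (nat \<Rightarrow> 'v \<Rightarrow> nat) \<Rightarrow> bool"
  where
  "partial_packing V A r n R T rank \<longleftrightarrow>
     (\<forall>j<n. R j \<subseteq> V \<and> T j \<subseteq> A \<and> ranked_arborescence r (R j) (T j) (rank j)) \<and>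
     (\<forall>j<n. \<forall>j'<n. j \<noteq> j' \<longrightarrow> T j \<inter> T j' = {}) \<and>
     cut_condition V r n R (A - (\<Union>j<n. T j))"

lemma in_degree_eq_card: "finite B \<Longrightarrow> in_degree B X = card {a\<in>B. tail a \<notin> X \<and> head a \<in> X}"
  unfolding in_degree_def by (simp add: sum.If_cases Int_def)

lemma in_degree_submodular: "in_degree B (X \<union> Z) + in_degree B (X \<inter> Z) \<le> in_degree B X + in_degree B Z"
  unfolding in_degree_def sum.distrib[symmetric] by (rule sum_mono) auto

lemma in_degree_remove:
  "finite B \<Longrightarrow> a \<in> B \<Longrightarrow>
     in_degree B X = in_degree (B - {a}) X + (if tail a \<notin> X \<and> head a \<in> X then 1 else 0)"
  unfolding in_degree_def by (simp add: sum.remove add.commute)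

lemma in_degree_pos_obtain:
  assumes "finite B" "0 < in_degree B X"
  obtains a where "a \<in> B" "tail a \<notin> X" "head a \<in> X"
  using assms by (auto simp: in_degree_eq_card card_gt_0_iff)

lemma in_degree_less_obtain:
  assumes "finite B" "in_degree B X < in_degree B Y"
  obtains a where "a \<in> B" "tail a \<notin> Y" "head a \<in> Y" "\<not> (tail a \<notin> X \<and> head a \<in> X)"
proof (rule ccontr)
  assume "\<not> thesis"
  then have "{a\<in>B. tail a \<notin> Y \<and> head a \<in> Y} \<subseteq> {a\<in>B. tail a \<notin> X \<and> head a \<in> X}"
    using that by blast
  then have "in_degree B Y \<le> in_degree B X"
    using \<open>finite B\<close> by (simp add: in_degree_eq_card card_mono)
  then show False using assms(2) by simp
qed

lemma cut_conditionD:
  "cut_condition V r n R B \<Longrightarrow> X \<subseteq> V - {r} \<Longrightarrow> X \<noteq> {} \<Longrightarrow> disjoint_count n R X \<le> in_degree B X"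
  unfolding cut_condition_def by blast

lemma tight_cut_Int:
  assumes i: "i < n" and cut: "cut_condition V r n R B"
    and X: "tight_cut V r n R B i X" and Z: "tight_cut V r n R B i Z" and "X \<inter> Z - R i \<noteq> {}"
  shows "tight_cut V r n R B i (X \<inter> Z)"
proof -
  have XZ: "X \<subseteq> V - {r}" "Z \<subseteq> V - {r}" "X \<inter> R i \<noteq> {}" "Z \<inter> R i \<noteq> {}"
    and tight: "in_degree B X = disjoint_count n R X" "in_degree B Z = disjoint_count n R Z"
    using X Z unfolding tight_cut_def by auto
  have "X \<union> Z \<subseteq> V - {r}" "X \<union> Z \<noteq> {}" "X \<inter> Z \<subseteq> V - {r}" "X \<inter> Z \<noteq> {}"
    using XZ \<open>X \<inter> Z - R i \<noteq> {}\<close> by auto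
  then have "disjoint_count n R (X \<union> Z) \<le> in_degree B (X \<union> Z)"
    "disjoint_count n R (X \<inter> Z) \<le> in_degree B (X \<inter> Z)"
    using cut_conditionD[OF cut] by simp_all
  then have "X \<inter> Z \<inter> R i \<noteq> {} \<and> in_degree B (X \<inter> Z) = disjoint_count n R (X \<inter> Z)"
    using disjoint_count_supermodular[OF i, of R X Z] in_degree_submodular[of B X Z] tight XZ(3,4)
    by (auto split: if_splits)
  then show ?thesis
    using \<open>X \<inter> Z \<subseteq> V - {r}\<close> \<open>X \<inter> Z - R i \<noteq> {}\<close> unfolding tight_cut_def by auto
qed

lemma cut_condition_arc_leaving:
  assumes "finite B" and B_ends: "\<forall>a\<in>B. tail a \<in> V \<and> head a \<in> V"
    and i: "i < n" and "r \<in> R i" "R i \<subseteq> V" "R i \<noteq> V"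
    and cut: "cut_condition V r n R B"
  obtains a where "a \<in> B" "tail a \<in> R i" "head a \<notin> R i"
proof -
  have "V - R i \<subseteq> V - {r}" "V - R i \<noteq> {}"
    using \<open>r \<in> R i\<close> \<open>R i \<subseteq> V\<close> \<open>R i \<noteq> V\<close> by auto
  then have "disjoint_count n R (V - R i) \<le> in_degree B (V - R i)"
    by (rule cut_conditionD[OF cut])
  moreover have "0 < disjoint_count n R (V - R i)"
    unfolding disjoint_count_def by (rule sum_pos2[where i = i]) (use i in auto)
  ultimately have "0 < in_degree B (V - R i)" by linarith
  then obtain a where "a \<in> B" "tail a \<notin> V - R i" "head a \<in> V - R i"
    by (rule in_degree_pos_obtain[OF \<open>finite B\<close>])
  then show thesis using that B_ends by auto
qed

lemma exists_arc_avoiding_tight_cuts: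
  assumes "finite V" "finite B" and B_ends: "\<forall>a\<in>B. tail a \<in> V \<and> head a \<in> V"
    and i: "i < n" and "r \<in> R i" "R i \<subseteq> V" "R i \<noteq> V"
    and cut: "cut_condition V r n R B"
  obtains a where "a \<in> B" "tail a \<in> R i" "head a \<notin> R i"
    "\<And>X. tight_cut V r n R B i X \<Longrightarrow> \<not> (tail a \<notin> X \<and> head a \<in> X)"
proof (cases "\<exists>X. tight_cut V r n R B i X")
  case False
  obtain a where "a \<in> B" "tail a \<in> R i" "head a \<notin> R i"
    using cut_condition_arc_leaving[OF assms(2-8)] .
  then show thesis using that False by blast
next
  case True
  then obtain X0 where "tight_cut V r n R B i X0" by blast
  then obtain X where X: "tight_cut V r n R B i X"
    and X_min: "\<And>Z. tight_cut V r n R B i Z \<Longrightarrow> card X \<le> card Z"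
    using ex_has_least_nat[of "tight_cut V r n R B i" X0 card] by blast
  then have "X \<subseteq> V - {r}" "X \<inter> R i \<noteq> {}" "X - R i \<noteq> {}"
    and X_tight: "in_degree B X = disjoint_count n R X" unfolding tight_cut_def by auto
  have "disjoint_count n R X < disjoint_count n R (X - R i)"
    by (rule disjoint_count_strict_antimono[OF i]) (use \<open>X \<inter> R i \<noteq> {}\<close> in auto)
  also have "\<dots> \<le> in_degree B (X - R i)"
    using \<open>X \<subseteq> V - {r}\<close> \<open>X - R i \<noteq> {}\<close> by (intro cut_conditionD[OF cut]) auto
  finally have "in_degree B X < in_degree B (X - R i)" using X_tight by simp
  then obtain a where "a \<in> B" "tail a \<notin> X - R i" "head a \<in> X - R i"
    "\<not> (tail a \<notin> X \<and> head a \<in> X)"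
    using in_degree_less_obtain[OF \<open>finite B\<close>] by blast
  then have a: "a \<in> B" "tail a \<in> X \<inter> R i" "head a \<in> X - R i" by auto
  have "\<not> (tail a \<notin> Z \<and> head a \<in> Z)" if Z: "tight_cut V r n R B i Z" for Z
  proof
    assume a_enters: "tail a \<notin> Z \<and> head a \<in> Z"
    then have "tight_cut V r n R B i (X \<inter> Z)"
      using tight_cut_Int[OF i cut X Z] a by blast
    moreover have "card (X \<inter> Z) < card X"
    proof (rule psubset_card_mono)
      show "finite X" using \<open>X \<subseteq> V - {r}\<close> \<open>finite V\<close> by (simp add: finite_subset)
      show "X \<inter> Z \<subset> X" using a a_enters by blast
    qed
    ultimately show False using X_min by (meson leD)
  qed
  then show thesis using that a by blast
qed

lemma cut_condition_add_arc:
  assumes "i < n" "finite B" "a \<in> B" "head a \<notin> R i"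
    and cut: "cut_condition V r n R B"
    and avoids: "\<And>X. tight_cut V r n R B i X \<Longrightarrow> \<not> (tail a \<notin> X \<and> head a \<in> X)"
  shows "cut_condition V r n (R(i := insert (head a) (R i))) (B - {a})"
  unfolding cut_condition_def
proof (intro allI impI)
  fix X assume X: "X \<subseteq> V - {r}" "X \<noteq> {}"
  have "disjoint_count n R X \<le> in_degree B X" using cut_conditionD[OF cut X] .
  moreover have "in_degree B X = in_degree (B - {a}) X + (if tail a \<notin> X \<and> head a \<in> X then 1 else 0)"
    using in_degree_remove assms(2,3) .
  moreover have "disjoint_count n R X = disjoint_count n (R(i := insert (head a) (R i))) X
                   + (if X \<inter> R i = {} \<and> head a \<in> X then 1 else 0)"
    using disjoint_count_insert \<open>i < n\<close> .
  moreover have "in_degree B X \<noteq> disjoint_count n R X"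
    if "tail a \<notin> X" "head a \<in> X" "X \<inter> R i \<noteq> {}"
    using avoids[of X] X that \<open>head a \<notin> R i\<close> unfolding tight_cut_def by blast
  ultimately show "disjoint_count n (R(i := insert (head a) (R i))) X \<le> in_degree (B - {a}) X"
    by (auto split: if_splits)
qed

lemma ranked_arborescence_singleton: "ranked_arborescence r {r} {} rank"
  unfolding ranked_arborescence_def by simp

lemma ranked_arborescence_add_arc:
  assumes T: "ranked_arborescence r R T rank" and "finite R" "tail a \<in> R" "head a \<notin> R"
  shows "ranked_arborescence r (insert (head a) R) (insert a T)
           (rank(head a := Suc (Max (rank ` R))))"
proof -
  let ?rank = "rank(head a := Suc (Max (rank ` R)))"
  have T_in_R: "\<forall>b\<in>T. tail b \<in> R \<and> head b \<in> R \<and> rank (tail b) < rank (head b)"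
    and "inj_on head T" and reach: "\<forall>v\<in>R. (r, v) \<in> (arc_rel T)\<^sup>*" and "r \<in> R"
    using T unfolding ranked_arborescence_def by auto
  have rank_R: "?rank v = rank v" if "v \<in> R" for v using that \<open>head a \<notin> R\<close> by auto
  have "rank (tail a) < ?rank (head a)"
    using \<open>finite R\<close> \<open>tail a \<in> R\<close> by (simp add: le_imp_less_Suc)
  then have arcs: "\<forall>b\<in>insert a T. tail b \<in> insert (head a) R \<and> head b \<in> insert (head a) R \<and>
                      ?rank (tail b) < ?rank (head b)"
    using T_in_R rank_R \<open>tail a \<in> R\<close> by auto
  have "inj_on head (insert a T)" using \<open>inj_on head T\<close> T_in_R \<open>head a \<notin> R\<close> by auto
  moreover have "(r, v) \<in> (arc_rel (insert a T))\<^sup>*" if "v \<in> insert (head a) R" for v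
  proof -
    have mono: "(arc_rel T)\<^sup>* \<subseteq> (arc_rel (insert a T))\<^sup>*"
      by (rule rtrancl_mono) (auto simp: arc_rel_def)
    have "(tail a, head a) \<in> arc_rel (insert a T)" by (auto simp: arc_rel_def)
    then show ?thesis
      using that reach mono \<open>tail a \<in> R\<close> by (auto intro: rtrancl_into_rtrancl)
  qed
  ultimately show ?thesis using arcs \<open>r \<in> R\<close> unfolding ranked_arborescence_def by blast
qed

lemma partial_packing_add_arc:
  assumes "finite V" "finite A" "\<forall>a\<in>A. tail a \<in> V \<and> head a \<in> V"
    and P: "partial_packing V A r n R T rank" and i: "i < n"
    and a: "a \<in> A - (\<Union>j<n. T j)" "tail a \<in> R i" "head a \<notin> R i"
    and avoids: "\<And>X. tight_cut V r n R (A - (\<Union>j<n. T j)) i X \<Longrightarrow> \<not> (tail a \<notin> X \<and> head a \<in> X)"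
  shows "partial_packing V A r n (R(i := insert (head a) (R i))) (T(i := insert a (T i)))
           (rank(i := (rank i)(head a := Suc (Max (rank i ` R i)))))"
    (is "partial_packing V A r n ?R ?T ?rank")
proof -
  let ?B = "A - (\<Union>j<n. T j)"
  have trees: "\<forall>j<n. R j \<subseteq> V \<and> T j \<subseteq> A \<and> ranked_arborescence r (R j) (T j) (rank j)"
    and disjoint: "\<forall>j<n. \<forall>j'<n. j \<noteq> j' \<longrightarrow> T j \<inter> T j' = {}"
    and cut: "cut_condition V r n R ?B"
    using P unfolding partial_packing_def by blast+
  have "A - (\<Union>j<n. ?T j) = ?B - {a}" using i by auto
  then have cut': "cut_condition V r n ?R (A - (\<Union>j<n. ?T j))"
    using cut_condition_add_arc[OF i _ _ a(3) cut avoids] \<open>finite A\<close> a(1) by simp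
  have "finite (R i)" using trees i \<open>finite V\<close> by (meson finite_subset)
  then have "ranked_arborescence r (?R i) (?T i) (?rank i)"
    using ranked_arborescence_add_arc[OF _ _ a(2,3)] trees i by simp
  moreover have "head a \<in> V" "a \<in> A" using a(1) assms(3) by blast+
  ultimately have "\<forall>j<n. ?R j \<subseteq> V \<and> ?T j \<subseteq> A \<and> ranked_arborescence r (?R j) (?T j) (?rank j)"
    using trees by simp
  moreover have "\<forall>j<n. \<forall>j'<n. j \<noteq> j' \<longrightarrow> ?T j \<inter> ?T j' = {}"
    using disjoint a(1) i by auto
  ultimately show ?thesis using cut' unfolding partial_packing_def by blast
qed

lemma partial_packing_step:
  assumes "finite V" "finite A" and A_ends: "\<forall>a\<in>A. tail a \<in> V \<and> head a \<in> V"
    and P: "partial_packing V A r n R T rank" and i: "i < n" and "R i \<noteq> V"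
  obtains R' T' rank' where "partial_packing V A r n R' T' rank'"
    "(\<Sum>j<n. card (V - R' j)) < (\<Sum>j<n. card (V - R j))"
proof -
  let ?B = "A - (\<Union>j<n. T j)"
  have "R i \<subseteq> V" "r \<in> R i" and cut: "cut_condition V r n R ?B"
    using P i unfolding partial_packing_def ranked_arborescence_def by auto
  moreover have "finite ?B" and B_ends: "\<forall>a\<in>?B. tail a \<in> V \<and> head a \<in> V"
    using \<open>finite A\<close> A_ends by auto
  ultimately obtain a where a: "a \<in> ?B" "tail a \<in> R i" "head a \<notin> R i"
    and avoids: "\<And>X. tight_cut V r n R ?B i X \<Longrightarrow> \<not> (tail a \<notin> X \<and> head a \<in> X)"
    using exists_arc_avoiding_tight_cuts[OF \<open>finite V\<close> \<open>finite ?B\<close> B_ends i \<open>r \<in> R i\<close> \<open>R i \<subseteq> V\<close>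
        \<open>R i \<noteq> V\<close> cut] by blast
  define R' where "R' = R(i := insert (head a) (R i))"
  have "head a \<in> V" using a(1) A_ends by blast
  have decreases: "(\<Sum>j<n. card (V - R' j)) < (\<Sum>j<n. card (V - R j))"
  proof (rule sum_strict_mono_ex1)
    show "\<forall>j\<in>{..<n}. card (V - R' j) \<le> card (V - R j)"
      unfolding R'_def using \<open>finite V\<close> by (auto intro!: card_mono)
    have "V - R' i = (V - R i) - {head a}" unfolding R'_def by auto
    then have "card (V - R' i) < card (V - R i)"
      using \<open>finite V\<close> \<open>head a \<in> V\<close> a(3) by (metis DiffI card_Diff1_less finite_Diff)
    then show "\<exists>j\<in>{..<n}. card (V - R' j) < card (V - R j)" using i by blast
  qed simp
  have "partial_packing V A r n R' (T(i := insert a (T i)))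
          (rank(i := (rank i)(head a := Suc (Max (rank i ` R i)))))"
    unfolding R'_def by (rule partial_packing_add_arc[OF assms(1-3) P i a avoids])
  then show thesis using decreases by (rule that)
qed

lemma partial_packing_complete:
  assumes "finite V" "finite A" "\<forall>a\<in>A. tail a \<in> V \<and> head a \<in> V"
    and "partial_packing V A r n R T rank"
  shows "\<exists>R' T' rank'. partial_packing V A r n R' T' rank' \<and> (\<forall>j<n. R' j = V)"
  using assms(4)
proof (induction "\<Sum>j<n. card (V - R j)" arbitrary: R T rank rule: less_induct)
  case less
  show ?case
  proof (cases "\<forall>j<n. R j = V")
    case True
    then show ?thesis using less.prems by blast
  next
    case False
    then obtain i where "i < n" "R i \<noteq> V" by blast
    then obtain R' T' rank' where "partial_packing V A r n R' T' rank'"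
      "(\<Sum>j<n. card (V - R' j)) < (\<Sum>j<n. card (V - R j))"
      using partial_packing_step[OF assms(1-3) less.prems] by blast
    then show ?thesis using less.hyps by blast
  qed
qed

theorem edmonds_arborescence_packing:
  assumes "finite V" "finite A" "\<forall>a\<in>A. tail a \<in> V \<and> head a \<in> V" "r \<in> V"
    and cut: "\<And>X. X \<subseteq> V - {r} \<Longrightarrow> X \<noteq> {} \<Longrightarrow> n \<le> in_degree A X"
  obtains T rank where "\<And>j. j < n \<Longrightarrow> T j \<subseteq> A \<and> ranked_arborescence r V (T j) (rank j)"
    "\<And>j j'. j < n \<Longrightarrow> j' < n \<Longrightarrow> j \<noteq> j' \<Longrightarrow> T j \<inter> T j' = {}"
proof -
  have "disjoint_count n (\<lambda>_. {r}) X \<le> in_degree A X" if "X \<subseteq> V - {r}" "X \<noteq> {}" for X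
  proof -
    have "X \<inter> {r} = {}" using that(1) by blast
    then show ?thesis using cut[OF that] by (simp add: disjoint_count_def)
  qed
  then have "partial_packing V A r n (\<lambda>_. {r}) (\<lambda>_. {}) (\<lambda>_ _. 0)"
    using \<open>r \<in> V\<close> ranked_arborescence_singleton
    unfolding partial_packing_def cut_condition_def by auto
  from partial_packing_complete[OF assms(1-3) this]
  obtain R T rank where "partial_packing V A r n R T rank" "\<forall>j<n. R j = V"
    by blast
  then show thesis using that[of T rank] unfolding partial_packing_def by simp
qed

end

lemma rtrancl_adj_crosses:
  assumes "(u, w) \<in> (adj ends H)\<^sup>*" "u \<notin> X" "w \<in> X"
  obtains e where "e \<in> H" "(fst (ends e) \<in> X) \<noteq> (snd (ends e) \<in> X)"
  using assms
proof (induction arbitrary: thesis rule: rtrancl_induct)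
  case base
  then show ?case by simp
next
  case (step y z)
  show ?case
  proof (cases "y \<in> X")
    case True
    then show ?thesis using step by blast
  next
    case False
    from \<open>(y, z) \<in> adj ends H\<close> obtain e where "e \<in> H" "ends e = (y, z) \<or> ends e = (z, y)"
      unfolding adj_def by auto
    then show ?thesis using False \<open>z \<in> X\<close> step.prems(1) by auto
  qed
qed

lemma finite_D_arcs: "finite F \<Longrightarrow> finite (D_arcs k U S F)"
  by (rule finite_subset[of _ "F \<times> {0..k} \<times> UNIV"]) (auto simp: D_arcs_def)

lemma kFGC_feasible_unsafe_cut_card:
  assumes feas: "kFGC_feasible k V E ends U F" and "finite F" "r \<in> V" "X \<subseteq> V - {r}" "X \<noteq> {}"
    and unsafe: "{e\<in>F. (fst (ends e) \<in> X) \<noteq> (snd (ends e) \<in> X)} \<subseteq> U"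
  shows "k + 1 \<le> card {e\<in>F. (fst (ends e) \<in> X) \<noteq> (snd (ends e) \<in> X)}"
proof (rule ccontr)
  let ?C = "{e\<in>F. (fst (ends e) \<in> X) \<noteq> (snd (ends e) \<in> X)}"
  assume "\<not> k + 1 \<le> card ?C"
  then have "card ?C \<le> k" by simp
  moreover have "?C \<subseteq> F \<inter> U" using unsafe by blast
  ultimately have "connected_sub V ends (F - ?C)"
    using feas unfolding kFGC_feasible_def by blast
  moreover obtain x where "x \<in> X" using \<open>X \<noteq> {}\<close> by blast
  moreover have "x \<in> V" "r \<notin> X" using \<open>x \<in> X\<close> \<open>X \<subseteq> V - {r}\<close> by auto
  ultimately have "(r, x) \<in> (adj ends (F - ?C))\<^sup>*"
    using \<open>r \<in> V\<close> unfolding connected_sub_def by simp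
  then obtain e where "e \<in> F - ?C" "(fst (ends e) \<in> X) \<noteq> (snd (ends e) \<in> X)"
    using rtrancl_adj_crosses[OF _ \<open>r \<notin> X\<close> \<open>x \<in> X\<close>] by blast
  then show False by simp
qed

lemma k_plus_one_le_in_degree_D_arcs:
  assumes "kFGC_feasible k V E ends U F" "U \<union> S = E" "finite F" "r \<in> V"
    and "X \<subseteq> V - {r}" "X \<noteq> {}"
  shows "k + 1 \<le> in_degree (arc_tail ends) (arc_head ends) (D_arcs k U S F) X"
proof -
  let ?C = "{e\<in>F. (fst (ends e) \<in> X) \<noteq> (snd (ends e) \<in> X)}"
  let ?In = "{a\<in>D_arcs k U S F. arc_tail ends a \<notin> X \<and> arc_head ends a \<in> X}"
  define copy where "copy e i = (e, i, snd (ends e) \<in> X)" for e and i :: nat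
  have "F \<subseteq> E" using assms(1) unfolding kFGC_feasible_def by blast
  have fin: "finite ?In" using finite_D_arcs[OF \<open>finite F\<close>] by simp
  have enters: "arc_tail ends (copy e i) \<notin> X \<and> arc_head ends (copy e i) \<in> X" if "e \<in> ?C" for e i
    using that unfolding copy_def arc_tail_def arc_head_def by auto
  have "k + 1 \<le> card ?In"
  proof (cases "\<exists>e\<in>?C. e \<in> S")
    case True
    then obtain e where "e \<in> ?C" "e \<in> S" by blast
    then have "copy e i \<in> D_arcs k U S F" if "i \<le> k" for i
      using that by (simp add: D_arcs_def copy_def)
    then have "copy e ` {0..k} \<subseteq> ?In" using enters[OF \<open>e \<in> ?C\<close>] by auto
    then have "card (copy e ` {0..k}) \<le> card ?In" by (rule card_mono[OF fin])
    moreover have "card (copy e ` {0..k}) = k + 1"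
      by (subst card_image) (auto simp: inj_on_def copy_def)
    ultimately show ?thesis by simp
  next
    case False
    then have "?C \<subseteq> U" using \<open>F \<subseteq> E\<close> \<open>U \<union> S = E\<close> by auto
    then have "copy e 0 \<in> D_arcs k U S F" if "e \<in> ?C" for e
      using that by (auto simp: D_arcs_def copy_def)
    then have "(\<lambda>e. copy e 0) ` ?C \<subseteq> ?In" using enters by auto
    then have "card ((\<lambda>e. copy e 0) ` ?C) \<le> card ?In" by (rule card_mono[OF fin])
    moreover have "card ((\<lambda>e. copy e 0) ` ?C) = card ?C"
      by (subst card_image) (auto simp: inj_on_def copy_def)
    moreover have "k + 1 \<le> card ?C"
      using \<open>?C \<subseteq> U\<close> by (rule kFGC_feasible_unsafe_cut_card[OF assms(1,3-6)])
    ultimately show ?thesis by simp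
  qed
  then show ?thesis
    using in_degree_eq_card[OF finite_D_arcs[OF \<open>finite F\<close>], of "arc_tail ends" "arc_head ends"] by simp
qed

text \<open>In a cycle, the vertex of maximal rank would be the head of both cycle arcs at it.\<close>
lemma undirected_acyclic_if_ranked:
  assumes inj: "inj_on (arc_head ends) T"
    and rank: "\<forall>a\<in>T. rank (arc_tail ends a) < (rank (arc_head ends a) :: nat)"
  shows "undirected_acyclic ends T"
  unfolding undirected_acyclic_def
proof (intro notI, elim exE)
  fix as vs assume "undirected_cycle ends T as vs"
  define m where "m = length as"
  have "m \<ge> 1" and "distinct as" and "length vs = m + 1" and "hd vs = last vs"
    and arcs_T: "\<And>i. i < m \<Longrightarrow> as ! i \<in> T"
    and joins: "\<And>i. i < m \<Longrightarrow>
      (arc_tail ends (as ! i) = vs ! i \<and> arc_head ends (as ! i) = vs ! Suc i) \<or>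
      (arc_head ends (as ! i) = vs ! i \<and> arc_tail ends (as ! i) = vs ! Suc i)"
    using \<open>undirected_cycle ends T as vs\<close> unfolding undirected_cycle_def m_def
    by (auto simp: Suc_le_eq)
  have "vs \<noteq> []" using \<open>length vs = m + 1\<close> by auto
  then have closed: "vs ! 0 = vs ! m"
    using \<open>length vs = m + 1\<close> \<open>hd vs = last vs\<close> by (simp add: hd_conv_nth last_conv_nth)
  define f where "f i = rank (vs ! i)" for i
  have head_fwd: "arc_head ends (as ! i) = vs ! Suc i" if "i < m" "f i \<le> f (Suc i)" for i
    using joins[OF \<open>i < m\<close>] rank arcs_T[OF \<open>i < m\<close>] \<open>f i \<le> f (Suc i)\<close> unfolding f_def by auto
  have head_bwd: "arc_head ends (as ! i) = vs ! i" if "i < m" "f (Suc i) \<le> f i" for i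
    using joins[OF \<open>i < m\<close>] rank arcs_T[OF \<open>i < m\<close>] \<open>f (Suc i) \<le> f i\<close> unfolding f_def by auto
  obtain j where "j \<in> {1..m}" and j_max: "\<And>i. i \<in> {1..m} \<Longrightarrow> f i \<le> f j"
    using Max_in[of "f ` {1..m}"] Max_ge[of "f ` {1..m}"] \<open>m \<ge> 1\<close> by fastforce
  have "f i \<le> f j" if "i \<le> m" for i
    using j_max[of i] j_max[of m] that \<open>m \<ge> 1\<close> closed unfolding f_def by (cases "i = 0") auto
  define j' where "j' = (if j = m then 0 else j)"
  have "j - 1 < m" "j' < m" "vs ! j' = vs ! j" "Suc (j - 1) = j"
    using \<open>j \<in> {1..m}\<close> closed unfolding j'_def by auto
  then have "arc_head ends (as ! (j - 1)) = arc_head ends (as ! j')"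
    using head_fwd[of "j - 1"] head_bwd[of j'] \<open>\<And>i. i \<le> m \<Longrightarrow> f i \<le> f j\<close>
    by (simp add: f_def Suc_leI)
  then have "as ! (j - 1) = as ! j'"
    using inj_onD[OF inj] arcs_T \<open>j - 1 < m\<close> \<open>j' < m\<close> by blast
  then have "j - 1 = j'"
    using \<open>distinct as\<close> \<open>j - 1 < m\<close> \<open>j' < m\<close> by (simp add: nth_eq_iff_index_eq m_def)
  then have "m = 1" using \<open>j \<in> {1..m}\<close> unfolding j'_def by (auto split: if_splits)
  then show False using joins[of 0] closed rank arcs_T[of 0] by auto
qed

lemma r_out_arborescence_if_ranked:
  assumes "T \<subseteq> A" "ranked_arborescence (arc_tail ends) (arc_head ends) r V T rank"
  shows "r_out_arborescence V ends A r T"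
proof -
  have "dir_rel ends T = arc_rel (arc_tail ends) (arc_head ends) T"
    unfolding dir_rel_def arc_rel_def by simp
  moreover have "undirected_acyclic ends T"
    using assms(2) undirected_acyclic_if_ranked unfolding ranked_arborescence_def by blast
  ultimately show ?thesis
    using assms unfolding r_out_arborescence_def ranked_arborescence_def by simp
qed

text \<open>Two arcs of \<open>T\<close> arising from the same edge either have the same orientation, hence the
  same head, or opposite ones, which the rank forbids.\<close>
lemma arc_cost_ranked_arborescence:
  assumes "T \<subseteq> D_arcs k U S F" "ranked_arborescence (arc_tail ends) (arc_head ends) r R T rank"
    and "finite F" "\<forall>e\<in>F. c e \<ge> 0"
  shows "arc_cost c T \<le> cost c F"
proof -
  have inj: "inj_on (arc_head ends) T"
    and rank: "\<forall>a\<in>T. rank (arc_tail ends a) < rank (arc_head ends a)"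
    using assms(2) unfolding ranked_arborescence_def by auto
  have "inj_on arc_edge T"
  proof (rule inj_onI)
    fix a b assume "a \<in> T" "b \<in> T" and same_edge: "arc_edge a = arc_edge b"
    show "a = b"
    proof (cases "snd (snd a) = snd (snd b)")
      case True
      then have "arc_head ends a = arc_head ends b"
        using same_edge by (simp add: arc_edge_def arc_head_def)
      then show ?thesis using inj_onD[OF inj _ \<open>a \<in> T\<close> \<open>b \<in> T\<close>] by simp
    next
      case False
      then have "arc_head ends a = arc_tail ends b" "arc_tail ends a = arc_head ends b"
        using same_edge by (auto simp: arc_edge_def arc_head_def arc_tail_def)
      then show ?thesis using rank \<open>a \<in> T\<close> \<open>b \<in> T\<close> by (metis order.asym)
    qed
  qed
  moreover have "arc_edge ` T \<subseteq> F" using assms(1) by (auto simp: D_arcs_def arc_edge_def)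
  ultimately have "arc_cost c T = (\<Sum>e\<in>arc_edge ` T. c e)" "arc_edge ` T \<subseteq> F"
    unfolding arc_cost_def by (simp_all add: sum.reindex)
  then show ?thesis
    unfolding cost_def using sum_mono2[OF \<open>finite F\<close> \<open>arc_edge ` T \<subseteq> F\<close>, of c] assms(4) by simp
qed

theorem lemma1:
  fixes k :: nat and V :: "'v set" and E :: "'e set" and ends :: "'e \<Rightarrow> 'v \<times> 'v"
    and U S F :: "'e set" and c :: "'e \<Rightarrow> real" and r :: 'v
  assumes "k \<ge> 1"
    and "ugraph V E ends"
    and "U \<union> S = E" and "U \<inter> S = {}"
    and "\<forall>e\<in>E. c e \<ge> 0"
    and "r \<in> V"
    and "kFGC_feasible k V E ends U F"
  shows "\<exists>T. r_out_multi_arborescence k V ends (D_arcs k U S F) r T \<and>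
             arc_cost c T \<le> real (k + 1) * cost c F"
proof -
  let ?D = "D_arcs k U S F"
  have "F \<subseteq> E" using assms(7) unfolding kFGC_feasible_def by blast
  then have "finite V" "finite F"
    and D_ends: "\<forall>a\<in>?D. arc_tail ends a \<in> V \<and> arc_head ends a \<in> V"
    using assms(2) finite_subset unfolding ugraph_def D_arcs_def arc_tail_def arc_head_def by auto
  obtain T rank where arb: "\<And>j. j < k + 1 \<Longrightarrow>
      T j \<subseteq> ?D \<and> ranked_arborescence (arc_tail ends) (arc_head ends) r V (T j) (rank j)"
    and disj: "\<And>j j'. j < k + 1 \<Longrightarrow> j' < k + 1 \<Longrightarrow> j \<noteq> j' \<Longrightarrow> T j \<inter> T j' = {}"
    using edmonds_arborescence_packing[OF \<open>finite V\<close> finite_D_arcs[OF \<open>finite F\<close>] D_ends \<open>r \<in> V\<close>]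
      k_plus_one_le_in_degree_D_arcs[OF assms(7,3) \<open>finite F\<close> \<open>r \<in> V\<close>] by blast
  have T_D: "T j \<subseteq> ?D"
    and T_ranked: "ranked_arborescence (arc_tail ends) (arc_head ends) r V (T j) (rank j)"
    if "j \<le> k" for j
    using arb[of j] that by auto
  have "r_out_arborescence V ends ?D r (T j)" if "j \<le> k" for j
    by (rule r_out_arborescence_if_ranked[OF T_D T_ranked]) (use that in simp_all)
  then have multi: "r_out_multi_arborescence k V ends ?D r (\<Union>j\<le>k. T j)"
    unfolding r_out_multi_arborescence_def using T_D disj by (intro conjI exI[of _ T]) auto
  have "arc_cost c (\<Union>j\<le>k. T j) = (\<Sum>j\<le>k. arc_cost c (T j))"
    unfolding arc_cost_def using disj finite_subset[OF T_D finite_D_arcs[OF \<open>finite F\<close>]]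
    by (intro sum.UNION_disjoint) auto
  also have "\<dots> \<le> (\<Sum>j\<le>k. cost c F)"
  proof (rule sum_mono)
    have "\<forall>e\<in>F. c e \<ge> 0" using \<open>F \<subseteq> E\<close> assms(5) by blast
    then show "arc_cost c (T j) \<le> cost c F" if "j \<in> {..k}" for j
      using arc_cost_ranked_arborescence[OF T_D T_ranked \<open>finite F\<close>] that by simp
  qed
  finally have "arc_cost c (\<Union>j\<le>k. T j) \<le> real (k + 1) * cost c F" by simp
  with multi show ?thesis by blast
qed

end
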